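(* Let $|\psi\rangle$ be a pure three-qubit state. If $\mathcal C_{ij}^2>\frac49$ holds for two distinct pairs $\{i,j\}\subset\{A,B,C\}$, then steering is non-monogamous for $|\psi\rangle$: the corresponding two reduced states both satisfy $S_{ij}>1$, i.e. both violate the three-settings CJWR linear steering inequality.
   Context: For a two-qubit state $\rho$ let $t_{kl}=\mathrm{Tr}[\rho\,\sigma_k\otimes\sigma_l]$ ($\sigma_k$ Pauli matrices) and $S(\rho)=\sum_{k,l=1}^3 t_{kl}^2$; $\rho_{ij}$ is the reduced state of qubits $i,j$ and $S_{ij}=S(\rho_{ij})$. The three-settings CJWR linear steering inequality has maximal value $\sqrt{S(\rho)}$ over settings, so it is violated iff $S(\rho)>1$. $\mathcal C_{ij}$ is the Wootters concurrence of $\rho_{ij}$: $\mathcal C(\rho)=\max\{0,\lambda_1-\lambda_2-\lambda_3-\lambda_4\}$, with $\lambda_1\ge\dots\ge\lambda_4$ the square roots of the eigenvalues of $\rho(\sigma_2\otimes\sigma_2)\rho^*(\sigma_2\otimes\sigma_2)$. *)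

theory Defs
  imports "Jordan_Normal_Form.Char_Poly" "HOL-Computational_Algebra.Polynomial"
begin

text \<open>Qubit basis index 0 or 1. A pure three-qubit state is a map
  psi a b c (a,b,c in {0,1}; qubits A,B,C), normalised.\<close>

definition normalized3 :: "(nat \<Rightarrow> nat \<Rightarrow> nat \<Rightarrow> complex) \<Rightarrow> bool" where
  "normalized3 psi \<longleftrightarrow>
     (\<Sum>a<2. \<Sum>b<2. \<Sum>c<2. (cmod (psi a b c))^2) = 1"

definition pauli :: "nat \<Rightarrow> complex mat" where
  "pauli k = (if k = 1 then mat_of_rows_list 2 [[0, 1], [1, 0]]
              else if k = 2 then mat_of_rows_list 2 [[0, -\<i>], [\<i>, 0]]
              else mat_of_rows_list 2 [[1, 0], [0, -1]])"

text \<open>Kronecker product of two 2x2 matrices; basis index 2*x+y.\<close>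
definition kron2 :: "complex mat \<Rightarrow> complex mat \<Rightarrow> complex mat" where
  "kron2 P Q = mat 4 4 (\<lambda>(i, j). P $$ (i div 2, j div 2) * Q $$ (i mod 2, j mod 2))"

text \<open>Two-qubit reduced states of |psi><psi|, qubits in the order of the pair.\<close>
definition rho_AB :: "(nat \<Rightarrow> nat \<Rightarrow> nat \<Rightarrow> complex) \<Rightarrow> complex mat" where
  "rho_AB psi = mat 4 4 (\<lambda>(i, j).
     \<Sum>c<2. psi (i div 2) (i mod 2) c * cnj (psi (j div 2) (j mod 2) c))"

definition rho_AC :: "(nat \<Rightarrow> nat \<Rightarrow> nat \<Rightarrow> complex) \<Rightarrow> complex mat" where
  "rho_AC psi = mat 4 4 (\<lambda>(i, j).
     \<Sum>b<2. psi (i div 2) b (i mod 2) * cnj (psi (j div 2) b (j mod 2)))"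

definition rho_BC :: "(nat \<Rightarrow> nat \<Rightarrow> nat \<Rightarrow> complex) \<Rightarrow> complex mat" where
  "rho_BC psi = mat 4 4 (\<lambda>(i, j).
     \<Sum>a<2. psi a (i div 2) (i mod 2) * cnj (psi a (j div 2) (j mod 2)))"

definition mtrace :: "complex mat \<Rightarrow> complex" where
  "mtrace A = (\<Sum>i<dim_row A. A $$ (i, i))"

definition corr :: "complex mat \<Rightarrow> nat \<Rightarrow> nat \<Rightarrow> real" where
  "corr \<rho> k l = Re (mtrace (\<rho> * kron2 (pauli k) (pauli l)))"

definition S_val :: "complex mat \<Rightarrow> real" where
  "S_val \<rho> = (\<Sum>k\<in>{1..3}. \<Sum>l\<in>{1..3}. (corr \<rho> k l)^2)"

text \<open>The eigenvalues (with multiplicity) of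
  R = rho (sigma_2 x sigma_2) rho^* (sigma_2 x sigma_2) are the roots of its
  characteristic polynomial; they are real and non-negative for a density
  matrix, lambda_i are their square roots in decreasing order.\<close>
definition wootters_R :: "complex mat \<Rightarrow> complex mat" where
  "wootters_R \<rho> = (let Y = kron2 (pauli 2) (pauli 2) in
      \<rho> * Y * map_mat cnj \<rho> * Y)"

definition wootters_lambdas :: "complex mat \<Rightarrow> real list" where
  "wootters_lambdas \<rho> =
     rev (sorted_list_of_multiset
       (image_mset (\<lambda>z. sqrt (Re z)) (proots (char_poly (wootters_R \<rho>)))))"

definition concurrence :: "complex mat \<Rightarrow> real" where
  "concurrence \<rho> = (let l = wootters_lambdas \<rho> in
      max 0 (l ! 0 - l ! 1 - l ! 2 - l ! 3))"

end

theory Submission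
  imports Defs
begin

(* A pure three-qubit state reduces on any two qubits to a state of rank at most two,
   rho = M M^* with M its 4x2 amplitude matrix. Wootters' matrix R then has characteristic
   polynomial z^2 (z^2 - |K|^2 z + |det K|^2) with K = M^T (sigma_y x sigma_y) M, so
   C^2 = |K|^2 - 2 |det K|, and det K, up to sign Cayley's hyperdeterminant, is the same for
   all three pairs. Expanding the correlation tensors gives
   S(rho_AB) = 1 + 2 C_AB^2 - C_AC^2 - C_BC^2, and similarly for the other pairs.
   Bringing psi to generalised Schmidt form by local unitaries, which preserve both the norm and
   C_AB^2 + C_AC^2 + C_BC^2, one checks that this sum is at most 4/3. Hence
   S(rho_AB) - 1 >= 3 C_AB^2 - 4/3 > 0 as soon as C_AB^2 > 4/9: each pair needs only its own
   concurrence hypothesis. *)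

section \<open>Concurrence of a state of rank two\<close>

lemma sum_lessThan_2: "(\<Sum>i<2. f i) = f 0 + f (1::nat)"
  by (simp add: numeral_eq_Suc)

lemma sum_lessThan_4: "(\<Sum>i<4. f i) = f 0 + f 1 + f 2 + f (3::nat)"
  by (simp add: numeral_eq_Suc)

lemma mat_mult_mat:
  "mat n m f * mat m k g = mat n k (\<lambda>(i, j). \<Sum>l<m. f (i, l) * g (l, j))"
  by (rule eq_matI) (auto simp: scalar_prod_def atLeast0LessThan)

lemma map_mat_mat: "map_mat h (mat n m f) = mat n m (\<lambda>ij. h (f ij))"
  by (rule eq_matI) auto

lemma det_mat_Suc:
  "det (mat (Suc n) (Suc n) f) =
   (\<Sum>i<Suc n. f (i, 0) * ((-1)^i * det (mat n n (\<lambda>(r, c). f (if r < i then r else Suc r, Suc c)))))"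
proof -
  have del: "mat_delete (mat (Suc n) (Suc n) f) i 0 =
      mat n n (\<lambda>(r, c). f (if r < i then r else Suc r, Suc c))" for i
    by (rule eq_matI) (auto simp: mat_delete_def)
  have "det (mat (Suc n) (Suc n) f) =
      (\<Sum>i<Suc n. mat (Suc n) (Suc n) f $$ (i, 0) * cofactor (mat (Suc n) (Suc n) f) i 0)"
    by (rule laplace_expansion_column) auto
  then show ?thesis
    by (simp add: cofactor_def del)
qed

lemma det_mat_4: "det (mat 4 4 f) =
    f (0,0) * (f (1,1) * (f (2,2) * f (3,3) - f (3,2) * f (2,3))
      - f (2,1) * (f (1,2) * f (3,3) - f (3,2) * f (1,3)) + f (3,1) * (f (1,2) * f (2,3) - f (2,2) * f (1,3)))
  - f (1,0) * (f (0,1) * (f (2,2) * f (3,3) - f (3,2) * f (2,3))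
      - f (2,1) * (f (0,2) * f (3,3) - f (3,2) * f (0,3)) + f (3,1) * (f (0,2) * f (2,3) - f (2,2) * f (0,3)))
  + f (2,0) * (f (0,1) * (f (1,2) * f (3,3) - f (3,2) * f (1,3))
      - f (1,1) * (f (0,2) * f (3,3) - f (3,2) * f (0,3)) + f (3,1) * (f (0,2) * f (1,3) - f (1,2) * f (0,3)))
  - f (3,0) * (f (0,1) * (f (1,2) * f (2,3) - f (2,2) * f (1,3))
      - f (1,1) * (f (0,2) * f (2,3) - f (2,2) * f (0,3)) + f (2,1) * (f (0,2) * f (1,3) - f (1,2) * f (0,3)))"
  by (simp add: numeral_eq_Suc det_mat_Suc det_dim_zero lessThan_Suc algebra_simps)

definition det2 :: "(nat \<Rightarrow> nat \<Rightarrow> complex) \<Rightarrow> complex" where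
  "det2 K = K 0 0 * K 1 1 - K 0 1 * K 1 0"

definition sq_frobenius :: "(nat \<Rightarrow> nat \<Rightarrow> complex) \<Rightarrow> real" where
  "sq_frobenius K = (\<Sum>c<2. \<Sum>d<2. (cmod (K c d))^2)"

text \<open>Sylvester's identity det (z I - M B) = z^2 det (z I - B M) for M of size 4x2 and B of size 2x4.\<close>
lemma det_scalar_minus_rank2:
  fixes m b :: "nat \<Rightarrow> nat \<Rightarrow> complex"
  defines "P \<equiv> \<lambda>c d. \<Sum>j<4. b c j * m j d"
  shows "det (mat 4 4 (\<lambda>(i, j). (if i = j then z else 0) - (\<Sum>c<2. m i c * b c j))) =
    z^2 * (z^2 - (P 0 0 + P 1 1) * z + det2 P)"
  unfolding det_mat_4 sum_lessThan_2 sum_lessThan_4 P_def det2_def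
  by (simp add: algebra_simps power2_eq_square power4_eq_xxxx)

lemma poly_char_poly_mat:
  fixes f :: "nat \<times> nat \<Rightarrow> 'a :: field"
  shows "poly (char_poly (mat n n f)) z = det (mat n n (\<lambda>(i, j). (if i = j then z else 0) - f (i, j)))"
proof -
  have "- char_matrix (mat n n f) z = mat n n (\<lambda>(i, j). (if i = j then z else 0) - f (i, j))"
    by (intro eq_matI) (auto simp: char_matrix_def)
  then show ?thesis
    using char_poly_matrix[of "mat n n f" n z] by simp
qed

definition sigma_yy :: "nat \<Rightarrow> nat \<Rightarrow> complex" where
  "sigma_yy i j = (if i + j = 3 then (if i = 1 \<or> i = 2 then 1 else -1) else 0)"

lemma kron2_pauli_2_2: "kron2 (pauli 2) (pauli 2) = mat 4 4 (\<lambda>(i, j). sigma_yy i j)"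
proof (rule eq_matI)
  fix i j assume "i < dim_row (mat 4 4 (\<lambda>(i, j). sigma_yy i j))"
    "j < dim_col (mat 4 4 (\<lambda>(i, j). sigma_yy i j))"
  then have "i \<in> {0, 1, 2, 3}" "j \<in> {0, 1, 2, 3}" by auto
  then show "kron2 (pauli 2) (pauli 2) $$ (i, j) = mat 4 4 (\<lambda>(i, j). sigma_yy i j) $$ (i, j)"
    by (auto simp: kron2_def sigma_yy_def pauli_def mat_of_rows_list_def)
qed (auto simp: kron2_def)

definition rho_of_amp :: "(nat \<Rightarrow> nat \<Rightarrow> complex) \<Rightarrow> complex mat" where
  "rho_of_amp M = mat 4 4 (\<lambda>(i, j). \<Sum>c<2. M i c * cnj (M j c))"

definition spin_flip_form :: "(nat \<Rightarrow> nat \<Rightarrow> complex) \<Rightarrow> nat \<Rightarrow> nat \<Rightarrow> complex" where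
  "spin_flip_form M c d = (\<Sum>i<4. \<Sum>j<4. M i c * sigma_yy i j * M j d)"

lemma spin_flip_form_sym: "spin_flip_form M c d = spin_flip_form M d c"
  unfolding spin_flip_form_def sum_lessThan_4 sigma_yy_def by (simp add: algebra_simps)

lemma wootters_R_rho_of_amp:
  "wootters_R (rho_of_amp M) = mat 4 4 (\<lambda>(i, j). \<Sum>c<2. M i c *
     (\<Sum>c'<2. cnj (spin_flip_form M c c') * (\<Sum>k<4. M k c' * sigma_yy k j)))"
  unfolding wootters_R_def Let_def kron2_pauli_2_2 rho_of_amp_def mat_mult_mat map_mat_mat
  by (rule eq_matI) (auto simp: spin_flip_form_def sum_lessThan_2 sum_lessThan_4 sigma_yy_def algebra_simps)

lemma poly_char_poly_wootters_R:
  fixes M :: "nat \<Rightarrow> nat \<Rightarrow> complex"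
  defines "K \<equiv> spin_flip_form M"
  shows "poly (char_poly (wootters_R (rho_of_amp M))) z =
     z^2 * (z^2 - of_real (sq_frobenius K) * z + of_real ((cmod (det2 K))^2))"
proof -
  define B where "B c j = (\<Sum>c'<2. cnj (K c c') * (\<Sum>k<4. M k c' * sigma_yy k j))" for c j
  have BM: "(\<Sum>j<4. B c j * M j d) = (\<Sum>c'<2. cnj (K c c') * K c' d)" for c d
  proof -
    have "(\<Sum>j<4. B c j * M j d) =
        (\<Sum>j<4. \<Sum>c'<2. \<Sum>k<4. cnj (K c c') * (M k c' * sigma_yy k j * M j d))"
      by (simp add: B_def sum_distrib_left sum_distrib_right mult.assoc)
    also have "\<dots> = (\<Sum>c'<2. \<Sum>j<4. \<Sum>k<4. cnj (K c c') * (M k c' * sigma_yy k j * M j d))"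
      by (rule sum.swap)
    also have "\<dots> = (\<Sum>c'<2. \<Sum>k<4. \<Sum>j<4. cnj (K c c') * (M k c' * sigma_yy k j * M j d))"
      by (rule sum.cong[OF refl], rule sum.swap)
    finally show ?thesis
      by (simp add: K_def spin_flip_form_def sum_distrib_left)
  qed
  have "poly (char_poly (wootters_R (rho_of_amp M))) z =
      det (mat 4 4 (\<lambda>(i, j). (if i = j then z else 0) - (\<Sum>c<2. M i c * B c j)))"
    unfolding wootters_R_rho_of_amp poly_char_poly_mat B_def K_def by simp
  also have "\<dots> = z^2 * (z^2 - of_real (sq_frobenius K) * z + of_real ((cmod (det2 K))^2))"
    unfolding det_scalar_minus_rank2 BM sq_frobenius_def det2_def complex_norm_square of_real_sum
    using spin_flip_form_sym[of M 0 1] by (simp add: K_def sum_lessThan_2 algebra_simps)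
  finally show ?thesis .
qed

lemma two_cmod_det2_le_sq_frobenius: "2 * cmod (det2 K) \<le> sq_frobenius K"
proof -
  have "cmod (det2 K) \<le> cmod (K 0 0) * cmod (K 1 1) + cmod (K 0 1) * cmod (K 1 0)"
    unfolding det2_def by (metis norm_mult norm_triangle_ineq4)
  moreover have "2 * cmod (K 0 0) * cmod (K 1 1) \<le> (cmod (K 0 0))^2 + (cmod (K 1 1))^2"
    "2 * cmod (K 0 1) * cmod (K 1 0) \<le> (cmod (K 0 1))^2 + (cmod (K 1 0))^2"
    by (rule sum_squares_bound)+
  ultimately show ?thesis
    unfolding sq_frobenius_def sum_lessThan_2 by simp
qed

lemma proots_prod_linear: "proots (\<Prod>x\<leftarrow>xs. [:- x, 1:]) = mset xs"
proof (induction xs)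
  case (Cons x xs)
  have "(\<Prod>x\<leftarrow>xs. [:- x, 1:]) \<noteq> 0"
    by (auto simp: prod_list_zero_iff)
  then have "proots ([:- x, 1:] * (\<Prod>x\<leftarrow>xs. [:- x, 1:])) =
      proots [:- x, 1:] + proots (\<Prod>x\<leftarrow>xs. [:- x, 1:])"
    by (intro proots_mult) auto
  then show ?case
    using Cons.IH by simp
qed simp

lemma concurrence_of_char_poly:
  fixes m1 m2 :: real
  assumes char_poly: "\<And>z. poly (char_poly (wootters_R \<rho>)) z = z^2 * (z - m1) * (z - m2)"
    and "0 \<le> m2" "m2 \<le> m1"
  shows "concurrence \<rho> = sqrt m1 - sqrt m2"
proof -
  have "char_poly (wootters_R \<rho>) = (\<Prod>x\<leftarrow>[0, 0, of_real m2, of_real m1]. [:- x, 1:])"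
    using char_poly by (intro poly_eq_poly_eq_iff[THEN iffD1] ext) (simp add: power2_eq_square algebra_simps)
  then have "proots (char_poly (wootters_R \<rho>)) = mset [0, 0, of_real m2, of_real m1]"
    by (simp only: proots_prod_linear)
  then have "image_mset (\<lambda>z. sqrt (Re z)) (proots (char_poly (wootters_R \<rho>))) =
      mset [0, 0, sqrt m2, sqrt m1]"
    by simp
  moreover have "sorted [0, 0, sqrt m2, sqrt m1]"
    using assms(2,3) by simp
  ultimately have "wootters_lambdas \<rho> = [sqrt m1, sqrt m2, 0, 0]"
    unfolding wootters_lambdas_def by (simp add: sorted_sort_id)
  then show ?thesis
    using assms(2,3) by (simp add: concurrence_def)
qed

lemma real_roots_of_sum_prod:
  fixes s q :: real
  assumes "0 \<le> q" "2 * q \<le> s"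
  obtains m1 m2 where "0 \<le> m2" "m2 \<le> m1" "m1 + m2 = s" "m1 * m2 = q^2"
proof
  define d where "d = sqrt (s^2 - 4 * q^2)"
  have "(2 * q)^2 \<le> s^2"
    using assms by (intro power_mono) auto
  then have "d^2 = s^2 - 4 * q^2" "0 \<le> d"
    by (simp_all add: d_def power_mult_distrib)
  moreover have "d \<le> s"
    using assms by (auto simp: d_def intro!: real_le_lsqrt)
  ultimately show "0 \<le> (s - d) / 2" "(s - d) / 2 \<le> (s + d) / 2" "(s + d) / 2 + (s - d) / 2 = s"
      "(s + d) / 2 * ((s - d) / 2) = q^2"
    by (simp_all add: field_simps power2_eq_square)
qed

lemma concurrence_sq_rho_of_amp:
  fixes M :: "nat \<Rightarrow> nat \<Rightarrow> complex"
  defines "K \<equiv> spin_flip_form M"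
  shows "(concurrence (rho_of_amp M))^2 = sq_frobenius K - 2 * cmod (det2 K)"
proof -
  obtain m1 m2 where m: "0 \<le> m2" "m2 \<le> m1"
      and sum: "m1 + m2 = sq_frobenius K" and prod: "m1 * m2 = (cmod (det2 K))^2"
    using real_roots_of_sum_prod[OF norm_ge_zero two_cmod_det2_le_sq_frobenius] by blast
  have "poly (char_poly (wootters_R (rho_of_amp M))) z = z^2 * (z - m1) * (z - m2)" for z
    unfolding poly_char_poly_wootters_R K_def[symmetric] sum[symmetric] prod[symmetric]
    by (simp add: algebra_simps power2_eq_square power4_eq_xxxx)
  then have "concurrence (rho_of_amp M) = sqrt m1 - sqrt m2"
    using m by (rule concurrence_of_char_poly)
  then have "(concurrence (rho_of_amp M))^2 = m1 + m2 - 2 * sqrt (m1 * m2)"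
    using m by (simp add: power2_diff real_sqrt_mult)
  then show ?thesis
    using prod sum by simp
qed

section \<open>Local unitary invariance\<close>

type_synonym qubits3 = "nat \<Rightarrow> nat \<Rightarrow> nat \<Rightarrow> complex"

definition amp_AB :: "qubits3 \<Rightarrow> nat \<Rightarrow> nat \<Rightarrow> complex" where
  "amp_AB psi i c = psi (i div 2) (i mod 2) c"

definition amp_AC :: "qubits3 \<Rightarrow> nat \<Rightarrow> nat \<Rightarrow> complex" where
  "amp_AC psi i b = psi (i div 2) b (i mod 2)"

definition amp_BC :: "qubits3 \<Rightarrow> nat \<Rightarrow> nat \<Rightarrow> complex" where
  "amp_BC psi i a = psi a (i div 2) (i mod 2)"

lemma rho_AB_eq: "rho_AB psi = rho_of_amp (amp_AB psi)"
  unfolding rho_AB_def rho_of_amp_def amp_AB_def ..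

lemma rho_AC_eq: "rho_AC psi = rho_of_amp (amp_AC psi)"
  unfolding rho_AC_def rho_of_amp_def amp_AC_def ..

lemma rho_BC_eq: "rho_BC psi = rho_of_amp (amp_BC psi)"
  unfolding rho_BC_def rho_of_amp_def amp_BC_def ..

lemma det2_spin_flip_form_AC: "det2 (spin_flip_form (amp_AC psi)) = det2 (spin_flip_form (amp_AB psi))"
  unfolding det2_def spin_flip_form_def amp_AC_def amp_AB_def
  by (simp add: sum_lessThan_4 sigma_yy_def One_nat_def) Groebner_Basis.algebra

lemma det2_spin_flip_form_BC: "det2 (spin_flip_form (amp_BC psi)) = det2 (spin_flip_form (amp_AB psi))"
  unfolding det2_def spin_flip_form_def amp_BC_def amp_AB_def
  by (simp add: sum_lessThan_4 sigma_yy_def One_nat_def) Groebner_Basis.algebra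

definition sq_norm3 :: "qubits3 \<Rightarrow> real" where
  "sq_norm3 psi = (\<Sum>a<2. \<Sum>b<2. \<Sum>c<2. (cmod (psi a b c))^2)"

definition su2 :: "complex \<Rightarrow> complex \<Rightarrow> nat \<Rightarrow> nat \<Rightarrow> complex" where
  "su2 a b i j = (if i = 0 then (if j = 0 then a else b) else (if j = 0 then - cnj b else cnj a))"

definition su2_on_A :: "complex \<Rightarrow> complex \<Rightarrow> qubits3 \<Rightarrow> qubits3" where
  "su2_on_A a b psi = (\<lambda>x y z. \<Sum>x'<2. su2 a b x x' * psi x' y z)"

definition su2_on_B :: "complex \<Rightarrow> complex \<Rightarrow> qubits3 \<Rightarrow> qubits3" where
  "su2_on_B a b psi = (\<lambda>x y z. \<Sum>y'<2. su2 a b y y' * psi x y' z)"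

definition su2_on_C :: "complex \<Rightarrow> complex \<Rightarrow> qubits3 \<Rightarrow> qubits3" where
  "su2_on_C a b psi = (\<lambda>x y z. \<Sum>z'<2. su2 a b z z' * psi x y z')"

definition su2_congr ::
    "complex \<Rightarrow> complex \<Rightarrow> (nat \<Rightarrow> nat \<Rightarrow> complex) \<Rightarrow> nat \<Rightarrow> nat \<Rightarrow> complex" where
  "su2_congr a b K = (\<lambda>c d. \<Sum>e<2. \<Sum>f<2. su2 a b c e * su2 a b d f * K e f)"

lemma sq_frobenius_scale: "sq_frobenius (\<lambda>c d. w * K c d) = (cmod w)^2 * sq_frobenius K"
  unfolding sq_frobenius_def sum_lessThan_2 by (simp add: norm_mult power_mult_distrib algebra_simps)

lemma det2_scale: "det2 (\<lambda>c d. w * K c d) = w^2 * det2 K"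
  unfolding det2_def by (simp add: algebra_simps power2_eq_square)

lemma cmod_su2_mult_sq:
  "(cmod (a * x + b * y))^2 + (cmod (- cnj b * x + cnj a * y))^2 =
     ((cmod a)^2 + (cmod b)^2) * ((cmod x)^2 + (cmod y)^2)"
  by (simp only: cmod_power2) (simp add: algebra_simps power2_eq_square)

lemma sq_frobenius_su2_congr:
  "sq_frobenius (su2_congr a b K) = ((cmod a)^2 + (cmod b)^2)^2 * sq_frobenius K"
proof -
  define L where "L c d = (\<Sum>f<2. su2 a b d f * K c f)" for c d
  have "su2_congr a b K = (\<lambda>c d. \<Sum>e<2. su2 a b c e * L e d)"
    by (simp add: su2_congr_def L_def sum_distrib_left mult.assoc)
  moreover have "sq_frobenius (\<lambda>c d. \<Sum>e<2. su2 a b c e * L e d) =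
      ((cmod a)^2 + (cmod b)^2) * sq_frobenius L"
    using cmod_su2_mult_sq[where x = "L 0 0" and y = "L 1 0"] cmod_su2_mult_sq[where x = "L 0 1" and y = "L 1 1"]
    unfolding sq_frobenius_def sum_lessThan_2 su2_def by (simp add: algebra_simps)
  moreover have "sq_frobenius L = ((cmod a)^2 + (cmod b)^2) * sq_frobenius K"
    using cmod_su2_mult_sq[where x = "K 0 0" and y = "K 0 1"] cmod_su2_mult_sq[where x = "K 1 0" and y = "K 1 1"]
    unfolding sq_frobenius_def L_def sum_lessThan_2 su2_def by (simp add: algebra_simps)
  ultimately show ?thesis
    by (simp add: power2_eq_square)
qed

lemma det2_su2_congr: "det2 (su2_congr a b K) = (a * cnj a + b * cnj b)^2 * det2 K"
  unfolding det2_def su2_congr_def sum_lessThan_2 su2_def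
  by (simp add: algebra_simps power2_eq_square)

lemma sq_norm3_su2_on:
  "sq_norm3 (su2_on_A a b psi) = ((cmod a)^2 + (cmod b)^2) * sq_norm3 psi"
  "sq_norm3 (su2_on_B a b psi) = ((cmod a)^2 + (cmod b)^2) * sq_norm3 psi"
  "sq_norm3 (su2_on_C a b psi) = ((cmod a)^2 + (cmod b)^2) * sq_norm3 psi"
  unfolding sq_norm3_def su2_on_A_def su2_on_B_def su2_on_C_def sum_lessThan_2 su2_def cmod_power2
  by (simp_all add: algebra_simps power2_eq_square)

lemma spin_flip_form_su2_on_A:
  "spin_flip_form (amp_AB (su2_on_A a b psi)) =
     (\<lambda>c d. (a * cnj a + b * cnj b) * spin_flip_form (amp_AB psi) c d)"
  "spin_flip_form (amp_AC (su2_on_A a b psi)) =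
     (\<lambda>c d. (a * cnj a + b * cnj b) * spin_flip_form (amp_AC psi) c d)"
  "spin_flip_form (amp_BC (su2_on_A a b psi)) = su2_congr a b (spin_flip_form (amp_BC psi))"
  unfolding spin_flip_form_def amp_AB_def amp_AC_def amp_BC_def su2_on_A_def su2_congr_def
    sum_lessThan_2 sum_lessThan_4 su2_def sigma_yy_def
  by (simp_all add: fun_eq_iff algebra_simps)

lemma spin_flip_form_su2_on_B:
  "spin_flip_form (amp_AB (su2_on_B a b psi)) =
     (\<lambda>c d. (a * cnj a + b * cnj b) * spin_flip_form (amp_AB psi) c d)"
  "spin_flip_form (amp_AC (su2_on_B a b psi)) = su2_congr a b (spin_flip_form (amp_AC psi))"
  "spin_flip_form (amp_BC (su2_on_B a b psi)) =
     (\<lambda>c d. (a * cnj a + b * cnj b) * spin_flip_form (amp_BC psi) c d)"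
  unfolding spin_flip_form_def amp_AB_def amp_AC_def amp_BC_def su2_on_B_def su2_congr_def
    sum_lessThan_2 sum_lessThan_4 su2_def sigma_yy_def
  by (simp_all add: fun_eq_iff algebra_simps)

lemma spin_flip_form_su2_on_C:
  "spin_flip_form (amp_AB (su2_on_C a b psi)) = su2_congr a b (spin_flip_form (amp_AB psi))"
  "spin_flip_form (amp_AC (su2_on_C a b psi)) =
     (\<lambda>c d. (a * cnj a + b * cnj b) * spin_flip_form (amp_AC psi) c d)"
  "spin_flip_form (amp_BC (su2_on_C a b psi)) =
     (\<lambda>c d. (a * cnj a + b * cnj b) * spin_flip_form (amp_BC psi) c d)"
  unfolding spin_flip_form_def amp_AB_def amp_AC_def amp_BC_def su2_on_C_def su2_congr_def
    sum_lessThan_2 sum_lessThan_4 su2_def sigma_yy_def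
  by (simp_all add: fun_eq_iff algebra_simps)

definition concurrence_sq_sum :: "qubits3 \<Rightarrow> real" where
  "concurrence_sq_sum psi =
     sq_frobenius (spin_flip_form (amp_AB psi)) + sq_frobenius (spin_flip_form (amp_AC psi))
     + sq_frobenius (spin_flip_form (amp_BC psi)) - 6 * cmod (det2 (spin_flip_form (amp_AB psi)))"

lemma concurrence_sq_sum_eq:
  "concurrence_sq_sum psi =
     (concurrence (rho_AB psi))^2 + (concurrence (rho_AC psi))^2 + (concurrence (rho_BC psi))^2"
  unfolding concurrence_sq_sum_def rho_AB_eq rho_AC_eq rho_BC_eq concurrence_sq_rho_of_amp
    det2_spin_flip_form_AC det2_spin_flip_form_BC
  by simp

lemma concurrence_sq_sum_su2_on:
  assumes "(cmod a)^2 + (cmod b)^2 = 1"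
  shows "concurrence_sq_sum (su2_on_A a b psi) = concurrence_sq_sum psi"
    "concurrence_sq_sum (su2_on_B a b psi) = concurrence_sq_sum psi"
    "concurrence_sq_sum (su2_on_C a b psi) = concurrence_sq_sum psi"
proof -
  have "a * cnj a + b * cnj b = of_real ((cmod a)^2 + (cmod b)^2)"
    unfolding of_real_add complex_norm_square ..
  then have "a * cnj a + b * cnj b = 1"
    using assms by simp
  then show "concurrence_sq_sum (su2_on_A a b psi) = concurrence_sq_sum psi"
    "concurrence_sq_sum (su2_on_B a b psi) = concurrence_sq_sum psi"
    "concurrence_sq_sum (su2_on_C a b psi) = concurrence_sq_sum psi"
    using assms
    by (simp_all add: concurrence_sq_sum_def spin_flip_form_su2_on_A spin_flip_form_su2_on_B
        spin_flip_form_su2_on_C sq_frobenius_scale det2_scale sq_frobenius_su2_congr det2_su2_congr)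
qed

section \<open>Generalised Schmidt form\<close>

lemma exists_unit_rescaling:
  fixes u v :: complex
  assumes "u \<noteq> 0 \<or> v \<noteq> 0"
  obtains n :: real where "n > 0" "(cmod (u / of_real n))^2 + (cmod (v / of_real n))^2 = 1"
proof -
  define n where "n = sqrt ((cmod u)^2 + (cmod v)^2)"
  have pos: "0 < (cmod u)^2 + (cmod v)^2"
    using assms by (auto simp: add_pos_nonneg add_nonneg_pos)
  then have "n > 0"
    unfolding n_def by (rule real_sqrt_gt_zero)
  moreover have "(cmod (u / of_real n))^2 + (cmod (v / of_real n))^2 = 1"
    using pos assms by (simp add: n_def norm_divide power_divide add_divide_distrib[symmetric])
  ultimately show ?thesis
    by (rule that)
qed

lemma exists_unit_zero_quadratic_form:
  fixes A B C :: complex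
  shows "\<exists>a b. (cmod a)^2 + (cmod b)^2 = 1 \<and> A * a^2 + B * a * b + C * b^2 = 0"
proof -
  obtain r s where nz: "r \<noteq> 0 \<or> s \<noteq> 0" and zero: "A * r^2 + B * r * s + C * s^2 = 0"
  proof (cases "A = 0")
    case True
    then show ?thesis
      by (intro that[of 1 0]) simp_all
  next
    case False
    define r where "r = (- B + csqrt (B^2 - 4 * A * C)) / (2 * A)"
    have "2 * A * r + B = csqrt (B^2 - 4 * A * C)"
      using False by (simp add: r_def field_simps)
    have "4 * A * (A * r^2 + B * r + C) = (2 * A * r + B)^2 - (B^2 - 4 * A * C)"
      by (simp add: algebra_simps power2_eq_square)
    also have "\<dots> = 0"
      unfolding \<open>2 * A * r + B = csqrt (B^2 - 4 * A * C)\<close> power2_csqrt by simp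
    finally have "4 * A * (A * r^2 + B * r + C) = 0" .
    then show ?thesis
      using False by (intro that[of r 1]) simp_all
  qed
  obtain n where n: "n > 0" "(cmod (r / of_real n))^2 + (cmod (s / of_real n))^2 = 1"
    using exists_unit_rescaling[OF nz] by blast
  have "A * (r / n)^2 + B * (r / n) * (s / n) + C * (s / n)^2 = (A * r^2 + B * r * s + C * s^2) / n^2"
    using n(1) by (simp add: field_simps power2_eq_square)
  then show ?thesis
    using n(2) zero by (intro exI[of _ "r / n"] exI[of _ "s / n"]) simp
qed

lemma exists_unit_annihilator:
  fixes p q :: complex
  shows "\<exists>a b. (cmod a)^2 + (cmod b)^2 = 1 \<and> - cnj b * p + cnj a * q = 0"
proof (cases "p = 0 \<and> q = 0")
  case True
  then show ?thesis
    by (intro exI[of _ 1] exI[of _ 0]) simp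
next
  case False
  then obtain n where n: "n > 0" "(cmod (cnj p / of_real n))^2 + (cmod (cnj q / of_real n))^2 = 1"
    using exists_unit_rescaling[of "cnj p" "cnj q"] by auto
  then show ?thesis
    by (intro exI[of _ "cnj p / n"] exI[of _ "cnj q / n"]) (simp add: field_simps)
qed

lemma exists_unit_annihilator_rank1:
  fixes p00 p01 p10 p11 :: complex
  assumes det: "p00 * p11 - p01 * p10 = 0"
  shows "\<exists>a b. (cmod a)^2 + (cmod b)^2 = 1 \<and>
    - cnj b * p00 + cnj a * p10 = 0 \<and> - cnj b * p01 + cnj a * p11 = 0"
proof (cases "p00 = 0 \<and> p10 = 0")
  case True
  then show ?thesis
    using exists_unit_annihilator[of p01 p11] by auto
next
  case False
  obtain a b where ab: "(cmod a)^2 + (cmod b)^2 = 1" and w0: "- cnj b * p00 + cnj a * p10 = 0"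
    using exists_unit_annihilator by blast
  define w1 where "w1 = - cnj b * p01 + cnj a * p11"
  have "w1 * p00 = p01 * (- cnj b * p00 + cnj a * p10) + cnj a * (p00 * p11 - p01 * p10)"
    "w1 * p10 = p11 * (- cnj b * p00 + cnj a * p10) + cnj b * (p00 * p11 - p01 * p10)"
    by (simp_all add: w1_def algebra_simps)
  then have "w1 = 0"
    using False det w0 by auto
  then show ?thesis
    using ab w0 by (auto simp: w1_def)
qed

text \<open>Generalised Schmidt decomposition (Acin et al.): a unitary on A makes the block psi 0 _ _
  singular, one on B then clears its second row, and one on C its remaining entry.\<close>
lemma exists_local_su2_schmidt_form:
  "\<exists>phi. sq_norm3 phi = sq_norm3 psi \<and> concurrence_sq_sum phi = concurrence_sq_sum psi \<and>
     phi 0 0 1 = 0 \<and> phi 0 1 0 = 0 \<and> phi 0 1 1 = 0"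
proof -
  obtain a1 b1 where ab1: "(cmod a1)^2 + (cmod b1)^2 = 1"
    and q1: "(psi 0 0 0 * psi 0 1 1 - psi 0 0 1 * psi 0 1 0) * a1^2
       + (psi 0 0 0 * psi 1 1 1 + psi 1 0 0 * psi 0 1 1 - psi 0 0 1 * psi 1 1 0 - psi 1 0 1 * psi 0 1 0) * a1 * b1
       + (psi 1 0 0 * psi 1 1 1 - psi 1 0 1 * psi 1 1 0) * b1^2 = 0"
    using exists_unit_zero_quadratic_form by blast
  define psi1 where "psi1 = su2_on_A a1 b1 psi"
  have "psi1 0 0 0 * psi1 0 1 1 - psi1 0 0 1 * psi1 0 1 0 = 0"
    using q1 unfolding psi1_def su2_on_A_def sum_lessThan_2 su2_def by (simp add: algebra_simps power2_eq_square)
  then obtain a2 b2 where ab2: "(cmod a2)^2 + (cmod b2)^2 = 1"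
    and c2: "- cnj b2 * psi1 0 0 0 + cnj a2 * psi1 0 1 0 = 0" "- cnj b2 * psi1 0 0 1 + cnj a2 * psi1 0 1 1 = 0"
    using exists_unit_annihilator_rank1 by blast
  define psi2 where "psi2 = su2_on_B a2 b2 psi1"
  have z2: "psi2 0 1 0 = 0" "psi2 0 1 1 = 0"
    using c2 unfolding psi2_def su2_on_B_def sum_lessThan_2 su2_def by simp_all
  obtain a3 b3 where ab3: "(cmod a3)^2 + (cmod b3)^2 = 1"
    and c3: "- cnj b3 * psi2 0 0 0 + cnj a3 * psi2 0 0 1 = 0"
    using exists_unit_annihilator by blast
  define psi3 where "psi3 = su2_on_C a3 b3 psi2"
  have "psi3 0 0 1 = 0" "psi3 0 1 0 = 0" "psi3 0 1 1 = 0"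
    using c3 z2 unfolding psi3_def su2_on_C_def sum_lessThan_2 su2_def by simp_all
  moreover have "sq_norm3 psi3 = sq_norm3 psi"
    using ab1 ab2 ab3 by (simp add: psi3_def psi2_def psi1_def sq_norm3_su2_on)
  moreover have "concurrence_sq_sum psi3 = concurrence_sq_sum psi"
    using ab1 ab2 ab3 by (simp add: psi3_def psi2_def psi1_def concurrence_sq_sum_su2_on)
  ultimately show ?thesis
    by blast
qed

lemma concurrence_sq_sum_schmidt_form:
  assumes "psi 0 0 1 = 0" "psi 0 1 0 = 0" "psi 0 1 1 = 0"
  shows "concurrence_sq_sum psi =
    4 * (cmod (psi 0 0 0))^2 * ((cmod (psi 1 0 1))^2 + (cmod (psi 1 1 0))^2) + 4 * (cmod (det2 (psi 1)))^2"
proof -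
  define l where "l = psi 0 0 0"
  have AB: "spin_flip_form (amp_AB psi) 0 0 = -2 * l * psi 1 1 0"
      "spin_flip_form (amp_AB psi) 0 1 = - l * psi 1 1 1"
      "spin_flip_form (amp_AB psi) 1 0 = - l * psi 1 1 1" "spin_flip_form (amp_AB psi) 1 1 = 0"
    and AC: "spin_flip_form (amp_AC psi) 0 0 = -2 * l * psi 1 0 1"
      "spin_flip_form (amp_AC psi) 0 1 = - l * psi 1 1 1"
      "spin_flip_form (amp_AC psi) 1 0 = - l * psi 1 1 1" "spin_flip_form (amp_AC psi) 1 1 = 0"
    and BC: "spin_flip_form (amp_BC psi) 0 0 = 0" "spin_flip_form (amp_BC psi) 0 1 = - l * psi 1 1 1"
      "spin_flip_form (amp_BC psi) 1 0 = - l * psi 1 1 1" "spin_flip_form (amp_BC psi) 1 1 = -2 * det2 (psi 1)"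
    unfolding spin_flip_form_def amp_AB_def amp_AC_def amp_BC_def det2_def sum_lessThan_4 sigma_yy_def l_def
    using assms by (simp_all add: algebra_simps)
  show ?thesis
    unfolding concurrence_sq_sum_def sq_frobenius_def sum_lessThan_2
      det2_def[of "spin_flip_form (amp_AB psi)"] AB AC BC
    by (simp add: l_def norm_mult power_mult_distrib power2_eq_square algebra_simps)
qed

lemma sq_norm3_schmidt_form:
  assumes "psi 0 0 1 = 0" "psi 0 1 0 = 0" "psi 0 1 1 = 0"
  shows "sq_norm3 psi = (cmod (psi 0 0 0))^2 + sq_frobenius (psi 1)"
  using assms by (simp add: sq_norm3_def sq_frobenius_def sum_lessThan_2)

lemma concurrence_sq_sum_bound_schmidt_form:
  assumes "psi 0 0 1 = 0" "psi 0 1 0 = 0" "psi 0 1 1 = 0"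
  shows "3 * concurrence_sq_sum psi \<le> 4 * (sq_norm3 psi)^2"
proof -
  define A where "A = (cmod (psi 0 0 0))^2"
  define g where "g = (cmod (psi 1 0 1))^2 + (cmod (psi 1 1 0))^2"
  define F where "F = sq_frobenius (psi 1)"
  have "(cmod (det2 (psi 1)))^2 \<le> (F / 2)^2"
    using two_cmod_det2_le_sq_frobenius[of "psi 1"] by (intro power_mono) (simp_all add: F_def)
  moreover have "A * g \<le> A * F"
    unfolding A_def g_def F_def sq_frobenius_def sum_lessThan_2 by (intro mult_left_mono) simp_all
  moreover have "0 \<le> (2 * A - F)^2"
    by simp
  ultimately show ?thesis
    unfolding concurrence_sq_sum_schmidt_form[of psi, OF assms] sq_norm3_schmidt_form[of psi, OF assms]
      A_def[symmetric] g_def[symmetric] F_def[symmetric]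
    by (simp add: power2_eq_square algebra_simps)
qed

lemma concurrence_sq_sum_bound: "3 * concurrence_sq_sum psi \<le> 4 * (sq_norm3 psi)^2"
  using exists_local_su2_schmidt_form[of psi] concurrence_sq_sum_bound_schmidt_form by metis

section \<open>Steering\<close>

lemma sum_atLeastAtMost_1_3: "(\<Sum>k\<in>{1..3::nat}. f k) = f 1 + f 2 + f 3"
  by (simp add: numeral_eq_Suc atLeastAtMostSuc_conv ac_simps)

lemma mtrace_mult_mat: "mtrace (mat n n f * mat n n g) = (\<Sum>i<n. \<Sum>k<n. f (i, k) * g (k, i))"
  unfolding mtrace_def mat_mult_mat by simp

lemma pauli_entries:
  "pauli 1 $$ (0, 0) = 0" "pauli 1 $$ (0, 1) = 1" "pauli 1 $$ (1, 0) = 1" "pauli 1 $$ (1, 1) = 0"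
  "pauli 2 $$ (0, 0) = 0" "pauli 2 $$ (0, 1) = -\<i>" "pauli 2 $$ (1, 0) = \<i>" "pauli 2 $$ (1, 1) = 0"
  "pauli 3 $$ (0, 0) = 1" "pauli 3 $$ (0, 1) = 0" "pauli 3 $$ (1, 0) = 0" "pauli 3 $$ (1, 1) = -1"
  by (simp_all add: pauli_def mat_of_rows_list_def)

lemma S_val_rho_AB:
  "S_val (rho_AB psi) = (sq_norm3 psi)^2 + 2 * sq_frobenius (spin_flip_form (amp_AB psi))
     - sq_frobenius (spin_flip_form (amp_AC psi)) - sq_frobenius (spin_flip_form (amp_BC psi))"
  unfolding S_val_def corr_def sum_atLeastAtMost_1_3 rho_AB_def kron2_def mtrace_mult_mat sq_frobenius_def
    sq_norm3_def spin_flip_form_def amp_AB_def amp_AC_def amp_BC_def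
  by (simp add: sum_lessThan_2 sum_lessThan_4 pauli_entries pauli_entries[unfolded One_nat_def]
      sigma_yy_def cmod_power2 One_nat_def) Groebner_Basis.algebra

lemma S_val_rho_AC:
  "S_val (rho_AC psi) = (sq_norm3 psi)^2 + 2 * sq_frobenius (spin_flip_form (amp_AC psi))
     - sq_frobenius (spin_flip_form (amp_AB psi)) - sq_frobenius (spin_flip_form (amp_BC psi))"
  unfolding S_val_def corr_def sum_atLeastAtMost_1_3 rho_AC_def kron2_def mtrace_mult_mat sq_frobenius_def
    sq_norm3_def spin_flip_form_def amp_AB_def amp_AC_def amp_BC_def
  by (simp add: sum_lessThan_2 sum_lessThan_4 pauli_entries pauli_entries[unfolded One_nat_def]
      sigma_yy_def cmod_power2 One_nat_def) Groebner_Basis.algebra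

lemma S_val_rho_BC:
  "S_val (rho_BC psi) = (sq_norm3 psi)^2 + 2 * sq_frobenius (spin_flip_form (amp_BC psi))
     - sq_frobenius (spin_flip_form (amp_AB psi)) - sq_frobenius (spin_flip_form (amp_AC psi))"
  unfolding S_val_def corr_def sum_atLeastAtMost_1_3 rho_BC_def kron2_def mtrace_mult_mat sq_frobenius_def
    sq_norm3_def spin_flip_form_def amp_AB_def amp_AC_def amp_BC_def
  by (simp add: sum_lessThan_2 sum_lessThan_4 pauli_entries pauli_entries[unfolded One_nat_def]
      sigma_yy_def cmod_power2 One_nat_def) Groebner_Basis.algebra

lemma S_val_eq_concurrences:
  assumes "normalized3 psi"
  shows "S_val (rho_AB psi) =
      1 + 2 * (concurrence (rho_AB psi))^2 - (concurrence (rho_AC psi))^2 - (concurrence (rho_BC psi))^2"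
    "S_val (rho_AC psi) =
      1 + 2 * (concurrence (rho_AC psi))^2 - (concurrence (rho_AB psi))^2 - (concurrence (rho_BC psi))^2"
    "S_val (rho_BC psi) =
      1 + 2 * (concurrence (rho_BC psi))^2 - (concurrence (rho_AB psi))^2 - (concurrence (rho_AC psi))^2"
  using assms
  unfolding S_val_rho_AB S_val_rho_AC S_val_rho_BC normalized3_def sq_norm3_def[symmetric]
  unfolding rho_AB_eq rho_AC_eq rho_BC_eq concurrence_sq_rho_of_amp det2_spin_flip_form_AC det2_spin_flip_form_BC
  by simp_all

lemma sum_concurrence_sq_le:
  assumes "normalized3 psi"
  shows "(concurrence (rho_AB psi))^2 + (concurrence (rho_AC psi))^2 + (concurrence (rho_BC psi))^2 \<le> 4 / 3"
  using concurrence_sq_sum_bound[of psi] assms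
  unfolding concurrence_sq_sum_eq normalized3_def sq_norm3_def by simp

lemma S_val_gt_one_of_concurrence:
  assumes "normalized3 psi"
  shows "(concurrence (rho_AB psi))^2 > 4/9 \<Longrightarrow> S_val (rho_AB psi) > 1"
    "(concurrence (rho_AC psi))^2 > 4/9 \<Longrightarrow> S_val (rho_AC psi) > 1"
    "(concurrence (rho_BC psi))^2 > 4/9 \<Longrightarrow> S_val (rho_BC psi) > 1"
  using S_val_eq_concurrences[OF assms] sum_concurrence_sq_le[OF assms] by linarith+

theorem corollary5:
  fixes psi :: "nat \<Rightarrow> nat \<Rightarrow> nat \<Rightarrow> complex"
  assumes "normalized3 psi"
  shows "((concurrence (rho_AB psi))^2 > 4/9 \<and> (concurrence (rho_AC psi))^2 > 4/9
           \<longrightarrow> S_val (rho_AB psi) > 1 \<and> S_val (rho_AC psi) > 1)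
       \<and> ((concurrence (rho_AB psi))^2 > 4/9 \<and> (concurrence (rho_BC psi))^2 > 4/9
           \<longrightarrow> S_val (rho_AB psi) > 1 \<and> S_val (rho_BC psi) > 1)
       \<and> ((concurrence (rho_AC psi))^2 > 4/9 \<and> (concurrence (rho_BC psi))^2 > 4/9
           \<longrightarrow> S_val (rho_AC psi) > 1 \<and> S_val (rho_BC psi) > 1)"
  using S_val_gt_one_of_concurrence[OF assms] by blast

end
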